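(* Let $m\subseteq\{a\}^*\times\{a,b,\#\}^*$ be the relation $\{(a^n,w\#w)\mid n\ge0,\ w\in\{a,b\}^*,\ |w|=n\}$. Then $m$ is not realized by any (nondeterministic) two-way generalized sequential machine.
   Context: A 2gsm is $M=(Q,\Sigma_1,\Sigma_2,\delta,q_{in},q_f)$ with finite state set $Q$ and finite instruction set $\delta$ of instructions $(p,\sigma,q_1,\alpha_1,\epsilon_1,q_0,\alpha_0,\epsilon_0)$, $p\in Q\setminus\{q_f\}$, $\sigma\in\Sigma_1\cup\{\vdash,\dashv\}$, $q_i\in Q$, $\alpha_i\in\Sigma_2^*$, $\epsilon_i\in\{-1,0,+1\}$. On input $w$ the read-only tape contains $\vdash w\dashv$ at positions $0,\dots,|w|+1$; the machine starts in $q_{in}$ at position $0$. In state $p$ it may execute any instruction starting with $p$: if the scanned symbol is $\sigma$ it enters $q_1$, appends $\alpha_1$ to the one-way output tape and moves by $\epsilon_1$, otherwise it does so with $(q_0,\alpha_0,\epsilon_0)$; the head may not leave the tape. $M$ realizes the relation of all $(w,z)$ for which some computation reaches $q_f$ having written $z$. *)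

theory Defs
  imports Main
begin

datatype 'c tsym = LEnd | REnd | Sym 'c

type_synonym ('q, 'c) instr = "'q \<times> 'c tsym \<times> 'q \<times> 'c list \<times> int \<times> 'q \<times> 'c list \<times> int"

type_synonym ('q, 'c) gsm2 = "'q set \<times> 'c set \<times> 'c set \<times> ('q, 'c) instr set \<times> 'q \<times> 'q"

definition is_gsm2 :: "('q, 'c) gsm2 \<Rightarrow> bool" where
  "is_gsm2 M = (case M of (Q, S1, S2, \<delta>, qin, qf) \<Rightarrow>
     finite Q \<and> finite S1 \<and> finite S2 \<and> finite \<delta> \<and> qin \<in> Q \<and> qf \<in> Q \<and>
     (\<forall>(p, \<sigma>, q1, \<alpha>1, e1, q0, \<alpha>0, e0) \<in> \<delta>.
        p \<in> Q - {qf} \<and> \<sigma> \<in> Sym ` S1 \<union> {LEnd, REnd} \<and>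
        q1 \<in> Q \<and> set \<alpha>1 \<subseteq> S2 \<and> e1 \<in> {-1, 0, 1} \<and>
        q0 \<in> Q \<and> set \<alpha>0 \<subseteq> S2 \<and> e0 \<in> {-1, 0, 1}))"

definition tape :: "'c list \<Rightarrow> int \<Rightarrow> 'c tsym" where
  "tape w i = (if i = 0 then LEnd else if i = int (length w) + 1 then REnd
               else Sym (w ! nat (i - 1)))"

text \<open>One computation step on input w between configurations (state, head position, output so far).
  A move that would leave the tape is not possible.\<close>
definition step :: "('q, 'c) gsm2 \<Rightarrow> 'c list \<Rightarrow> ('q \<times> int \<times> 'c list) \<Rightarrow> ('q \<times> int \<times> 'c list) \<Rightarrow> bool" where
  "step M w c c' = (case M of (Q, S1, S2, \<delta>, qin, qf) \<Rightarrow>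
     (case c of (p, i, z) \<Rightarrow>
       (\<exists>\<sigma> q1 \<alpha>1 e1 q0 \<alpha>0 e0. (p, \<sigma>, q1, \<alpha>1, e1, q0, \<alpha>0, e0) \<in> \<delta> \<and>
          (if tape w i = \<sigma> then c' = (q1, i + e1, z @ \<alpha>1) else c' = (q0, i + e0, z @ \<alpha>0)) \<and>
          0 \<le> fst (snd c') \<and> fst (snd c') \<le> int (length w) + 1)))"

definition realized :: "('q, 'c) gsm2 \<Rightarrow> ('c list \<times> 'c list) set" where
  "realized M = (case M of (Q, S1, S2, \<delta>, qin, qf) \<Rightarrow>
     {(w, z). set w \<subseteq> S1 \<and> (\<exists>i. (step M w)\<^sup>*\<^sup>* (qin, 0, []) (qf, i, z))})"

definition rel_m :: "'c \<Rightarrow> 'c \<Rightarrow> 'c \<Rightarrow> ('c list \<times> 'c list) set" where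
  "rel_m a b h = {(replicate n a, w @ [h] @ w) | n w. set w \<subseteq> {a, b} \<and> length w = n}"

end

theory Submission
  imports Defs
begin

text \<open>
  Let L bound the length of the output of a single instruction. An accepting run on \<open>a\<^sup>n\<close>
  that writes \<open>w # w\<close> passes through a configuration whose output is \<open>w # v\<close> with
  \<open>|v| < L\<close>; record its state, head position and \<open>v\<close>. There are only \<open>O(n)\<close> such
  records but \<open>2\<^sup>n\<close> words \<open>w\<close>, so two words \<open>w \<noteq> w'\<close> share one. Since a run continues
  independently of the output written so far, the first half of the run for \<open>w\<close> followed by
  the second half of the run for \<open>w'\<close> is an accepting run writing \<open>w # w'\<close>, which is not
  in the relation.
\<close>

definition max_output_length :: "('q, 'c) instr set \<Rightarrow> nat" where
  "max_output_length \<delta> =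
     Max (insert 0 ((\<lambda>(p, \<sigma>, q1, \<alpha>1, e1, q0, \<alpha>0, e0). max (length \<alpha>1) (length \<alpha>0)) ` \<delta>))"

lemma instr_output_length_le:
  assumes "finite \<delta>" and "(p, \<sigma>, q1, \<alpha>1, e1, q0, \<alpha>0, e0) \<in> \<delta>"
  shows "length \<alpha>1 \<le> max_output_length \<delta>" and "length \<alpha>0 \<le> max_output_length \<delta>"
proof -
  have "max (length \<alpha>1) (length \<alpha>0) \<le> max_output_length \<delta>"
    unfolding max_output_length_def using assms by (intro Max_ge) force+
  then show "length \<alpha>1 \<le> max_output_length \<delta>" and "length \<alpha>0 \<le> max_output_length \<delta>"
    by simp_all
qed

lemma step_appends_output:
  assumes "step (Q, S1, S2, \<delta>, qin, qf) x (p, i, z) (q, j, z')"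
  obtains \<alpha> where "z' = z @ \<alpha>"
    and "\<And>z0. step (Q, S1, S2, \<delta>, qin, qf) x (p, i, z0) (q, j, z0 @ \<alpha>)"
proof -
  from assms obtain \<sigma> q1 \<alpha>1 e1 q0 \<alpha>0 e0 where
    instr: "(p, \<sigma>, q1, \<alpha>1, e1, q0, \<alpha>0, e0) \<in> \<delta>" and
    move: "if tape x i = \<sigma> then (q, j, z') = (q1, i + e1, z @ \<alpha>1)
           else (q, j, z') = (q0, i + e0, z @ \<alpha>0)" and
    bounds: "0 \<le> j" "j \<le> int (length x) + 1"
    unfolding step_def by auto
  let ?\<alpha> = "if tape x i = \<sigma> then \<alpha>1 else \<alpha>0"
  show thesis
  proof
    show "z' = z @ ?\<alpha>" using move by (auto split: if_splits)
    show "step (Q, S1, S2, \<delta>, qin, qf) x (p, i, z0) (q, j, z0 @ ?\<alpha>)" for z0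
      unfolding step_def prod.case using instr move bounds
      by (intro exI[of _ \<sigma>] exI[of _ q1] exI[of _ \<alpha>1] exI[of _ e1]
          exI[of _ q0] exI[of _ \<alpha>0] exI[of _ e0])
         (auto split: if_splits)
  qed
qed

lemma step_output_length_le:
  assumes "finite \<delta>" and "step (Q, S1, S2, \<delta>, qin, qf) x (p, i, z) (q, j, z')"
  shows "length z' \<le> length z + max_output_length \<delta>"
proof -
  from assms(2) obtain \<sigma> q1 \<alpha>1 e1 q0 \<alpha>0 e0 where
    instr: "(p, \<sigma>, q1, \<alpha>1, e1, q0, \<alpha>0, e0) \<in> \<delta>" and
    "z' = (if tape x i = \<sigma> then z @ \<alpha>1 else z @ \<alpha>0)"
    unfolding step_def by (auto split: if_splits)
  then show ?thesis using instr_output_length_le[OF assms(1) instr] by auto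
qed

lemma step_target_in_bounds:
  assumes "is_gsm2 (Q, S1, S2, \<delta>, qin, qf)" and "step (Q, S1, S2, \<delta>, qin, qf) x c (q, j, z)"
  shows "q \<in> Q \<and> 0 \<le> j \<and> j \<le> int (length x) + 1"
  using assms unfolding is_gsm2_def step_def by (cases c) (fastforce split: if_splits)

lemma rtranclp_step_appends_output:
  assumes "(step (Q, S1, S2, \<delta>, qin, qf) x)\<^sup>*\<^sup>* (p, i, z) (q, j, z')"
  obtains y where "z' = z @ y"
    and "\<And>z0. (step (Q, S1, S2, \<delta>, qin, qf) x)\<^sup>*\<^sup>* (p, i, z0) (q, j, z0 @ y)"
  using assms
proof (induction "(q, j, z')" arbitrary: q j z' thesis rule: rtranclp_induct)
  case base
  show thesis by (rule base.prems(1)[of "[]"]) simp_all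
next
  case (step c)
  obtain r k u where c: "c = (r, k, u)" by (cases c)
  obtain y where y: "u = z @ y" "\<And>z0. (step (Q, S1, S2, \<delta>, qin, qf) x)\<^sup>*\<^sup>* (p, i, z0) (r, k, z0 @ y)"
    using step.hyps(3) c by blast
  obtain \<alpha> where \<alpha>: "z' = u @ \<alpha>" "\<And>z0. step (Q, S1, S2, \<delta>, qin, qf) x (r, k, z0) (q, j, z0 @ \<alpha>)"
    using step.hyps(2) c by (auto elim: step_appends_output)
  show thesis
  proof (rule step.prems)
    show "z' = z @ y @ \<alpha>" using y(1) \<alpha>(1) by simp
    show "(step (Q, S1, S2, \<delta>, qin, qf) x)\<^sup>*\<^sup>* (p, i, z0) (q, j, z0 @ y @ \<alpha>)" for z0
      using rtranclp.rtrancl_into_rtrancl[OF y(2) \<alpha>(2)[of "z0 @ y"]] by simp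
  qed
qed

lemma reachable_in_bounds:
  assumes "is_gsm2 (Q, S1, S2, \<delta>, qin, qf)"
    and "(step (Q, S1, S2, \<delta>, qin, qf) x)\<^sup>*\<^sup>* (qin, 0, []) (q, i, z)"
  shows "q \<in> Q \<and> 0 \<le> i \<and> i \<le> int (length x) + 1"
  using assms(2)
proof (cases rule: rtranclp.cases)
  case rtrancl_refl
  then show ?thesis using assms(1) unfolding is_gsm2_def by auto
next
  case (rtrancl_into_rtrancl c)
  then show ?thesis using step_target_in_bounds[OF assms(1)] by blast
qed

lemma rtranclp_passes_level:
  fixes f :: "'a \<Rightarrow> nat"
  assumes "R\<^sup>*\<^sup>* c d" and "f c \<le> n" and "n < f d"
    and jump: "\<And>c c'. R c c' \<Longrightarrow> f c' \<le> f c + L"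
  obtains e where "R\<^sup>*\<^sup>* c e" and "R\<^sup>*\<^sup>* e d" and "n < f e" and "f e \<le> n + L"
  using assms(1-3)
proof (induction arbitrary: thesis rule: converse_rtranclp_induct)
  case base
  then show ?case by simp
next
  case (step c c')
  show ?case
  proof (cases "n < f c'")
    case True
    then show ?thesis
      using step.prems(1)[of c'] step.hyps jump[OF step.hyps(1)] step.prems(2) by auto
  next
    case False
    then obtain e where "R\<^sup>*\<^sup>* c' e" "R\<^sup>*\<^sup>* e d" "n < f e" "f e \<le> n + L"
      using step.IH step.prems(3) by (metis not_le)
    then show ?thesis
      using step.prems(1) step.hyps(1) by (meson converse_rtranclp_into_rtranclp)
  qed
qed

lemma append_eq_longer_prefix:
  assumes "w @ h # u = z @ y" and "length w < length z"
  obtains v where "z = w @ h # v" and "u = v @ y"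
proof -
  obtain us where "w @ us = z" and "h # u = us @ y"
    using assms by (auto simp: append_eq_append_conv2)
  with assms(2) show thesis
    by (cases us) (auto intro: that)
qed

lemma accepting_run_midpoint:
  assumes M: "is_gsm2 (Q, S1, S2, \<delta>, qin, qf)"
    and run: "(step (Q, S1, S2, \<delta>, qin, qf) x)\<^sup>*\<^sup>* (qin, 0, []) (qf, j, w @ h # u)"
  obtains q i v where "q \<in> Q" and "0 \<le> i" and "i \<le> int (length x) + 1"
    and "length v < max_output_length \<delta>" and "set v \<subseteq> set u"
    and "(step (Q, S1, S2, \<delta>, qin, qf) x)\<^sup>*\<^sup>* (qin, 0, []) (q, i, w @ h # v)"
    and "(step (Q, S1, S2, \<delta>, qin, qf) x)\<^sup>*\<^sup>* (q, i, w @ h # v) (qf, j, w @ h # u)"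
proof -
  let ?M = "(Q, S1, S2, \<delta>, qin, qf)"
  have "finite \<delta>" using M unfolding is_gsm2_def by simp
  then have jump: "length (snd (snd c')) \<le> length (snd (snd c)) + max_output_length \<delta>"
    if "step ?M x c c'" for c c'
    using that by (cases c; cases c') (auto intro: step_output_length_le)
  obtain c where
    "(step ?M x)\<^sup>*\<^sup>* (qin, 0, []) c" "(step ?M x)\<^sup>*\<^sup>* c (qf, j, w @ h # u)"
    "length w < length (snd (snd c))" "length (snd (snd c)) \<le> length w + max_output_length \<delta>"
    by (rule rtranclp_passes_level[OF run, where f = "\<lambda>c. length (snd (snd c))"
         and n = "length w" and L = "max_output_length \<delta>"])
       (use jump in auto)
  then obtain q i z where
    to_mid: "(step ?M x)\<^sup>*\<^sup>* (qin, 0, []) (q, i, z)" and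
    from_mid: "(step ?M x)\<^sup>*\<^sup>* (q, i, z) (qf, j, w @ h # u)" and
    level: "length w < length z" "length z \<le> length w + max_output_length \<delta>"
    by (cases c) auto
  obtain y where "w @ h # u = z @ y"
    using from_mid by (rule rtranclp_step_appends_output)
  then obtain v where z: "z = w @ h # v" and "u = v @ y"
    using level(1) by (rule append_eq_longer_prefix)
  show thesis
  proof
    show "q \<in> Q" "0 \<le> i" "i \<le> int (length x) + 1"
      using reachable_in_bounds[OF M to_mid] by simp_all
    show "length v < max_output_length \<delta>" using level(2) z by simp
    show "set v \<subseteq> set u" using \<open>u = v @ y\<close> by simp
  qed (use to_mid from_mid z in simp_all)
qed

lemma rtranclp_step_splice:
  assumes "(step (Q, S1, S2, \<delta>, qin, qf) x)\<^sup>*\<^sup>* c (q, i, z1 @ v)"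
    and "(step (Q, S1, S2, \<delta>, qin, qf) x)\<^sup>*\<^sup>* (q, i, z2 @ v) (q', j, z2 @ u)"
  shows "(step (Q, S1, S2, \<delta>, qin, qf) x)\<^sup>*\<^sup>* c (q', j, z1 @ u)"
proof -
  obtain y where "z2 @ u = (z2 @ v) @ y"
    and "(step (Q, S1, S2, \<delta>, qin, qf) x)\<^sup>*\<^sup>* (q, i, z1 @ v) (q', j, (z1 @ v) @ y)"
    using assms(2) by (metis rtranclp_step_appends_output)
  then show ?thesis using rtranclp_trans[OF assms(1)] by simp
qed

lemma pigeonhole_rel:
  assumes "finite K" and "card K < card W" and "\<And>w. w \<in> W \<Longrightarrow> \<exists>k\<in>K. P w k"
  obtains w w' k where "w \<in> W" and "w' \<in> W" and "w \<noteq> w'" and "P w k" and "P w' k"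
proof -
  define f where "f w = (SOME k. k \<in> K \<and> P w k)" for w
  have f: "f w \<in> K \<and> P w (f w)" if "w \<in> W" for w
    unfolding f_def using assms(3)[OF that] by (rule someI2_bex)
  have "\<not> inj_on f W"
  proof
    assume "inj_on f W"
    then have "card W \<le> card K"
      using f by (intro card_inj_on_le[OF _ _ assms(1)]) auto
    with assms(2) show False by simp
  qed
  then show thesis
    unfolding inj_on_def using f that by metis
qed

lemma ex_mult_less_power2: "\<exists>n::nat. A * (n + 2) < 2 ^ n"
proof -
  have "Suc A * Suc A \<le> 2 ^ A * 2 ^ A"
    using Suc_leI[OF less_exp] by (intro mult_le_mono)
  then have h: "Suc A * Suc A \<le> 2 ^ (2 * A)" by (simp add: power_add mult_2)
  have "A * (2 * A + 4 + 2) < 4 * (Suc A * Suc A)" by (simp add: algebra_simps)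
  also have "\<dots> \<le> 2 ^ (2 * A + 2)" using h by (simp add: power_add)
  finally show ?thesis by (intro exI[of _ "2 * A + 2"]) (simp add: algebra_simps)
qed

lemma gsm2_crossed_copy_if_few_midpoints:
  assumes M: "is_gsm2 (Q, S1, S2, \<delta>, qin, qf)" and "finite A"
    and few_midpoints: "card Q * (length x + 2) * card {v. set v \<subseteq> A \<and> length v \<le> max_output_length \<delta>}
      < card {w. set w \<subseteq> A \<and> length w = n}"
    and copies: "\<And>w. set w \<subseteq> A \<Longrightarrow> length w = n \<Longrightarrow>
      (x, w @ h # w) \<in> realized (Q, S1, S2, \<delta>, qin, qf)"
  obtains w w' where "set w \<subseteq> A" and "length w = n" and "set w' \<subseteq> A" and "length w' = n"
    and "w \<noteq> w'" and "(x, w @ h # w') \<in> realized (Q, S1, S2, \<delta>, qin, qf)"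
proof -
  let ?W = "{w. set w \<subseteq> A \<and> length w = n}"
  let ?V = "{v. set v \<subseteq> A \<and> length v \<le> max_output_length \<delta>}"
  let ?K = "Q \<times> {0..int (length x) + 1} \<times> ?V"
  let ?run = "(step (Q, S1, S2, \<delta>, qin, qf) x)\<^sup>*\<^sup>*"
  define midpoint where "midpoint w = (\<lambda>(q, i, v). ?run (qin, 0, []) (q, i, w @ h # v) \<and>
      (\<exists>j. ?run (q, i, w @ h # v) (qf, j, w @ h # w)))" for w
  have "finite ?K"
    using M \<open>finite A\<close> finite_lists_length_le[of A] unfolding is_gsm2_def by simp
  moreover have "card ?K < card ?W"
  proof -
    have "card {0..int (length x) + 1} = length x + 2" by simp
    then show ?thesis using few_midpoints by (simp add: card_cartesian_product algebra_simps)
  qed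
  moreover have "\<exists>k\<in>?K. midpoint w k" if "w \<in> ?W" for w
  proof -
    from that have "(x, w @ h # w) \<in> realized (Q, S1, S2, \<delta>, qin, qf)"
      by (auto intro: copies)
    then obtain j where "?run (qin, 0, []) (qf, j, w @ h # w)"
      unfolding realized_def by auto
    then obtain q i v where "q \<in> Q" "0 \<le> i" "i \<le> int (length x) + 1"
      "length v < max_output_length \<delta>" "set v \<subseteq> set w"
      "?run (qin, 0, []) (q, i, w @ h # v)" "?run (q, i, w @ h # v) (qf, j, w @ h # w)"
      by (rule accepting_run_midpoint[OF M])
    then show ?thesis
      using that unfolding midpoint_def by (intro bexI[of _ "(q, i, v)"]) auto
  qed
  ultimately obtain w w' k where "w \<in> ?W" "w' \<in> ?W" "w \<noteq> w'" "midpoint w k" "midpoint w' k"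
    by (rule pigeonhole_rel)
  moreover obtain q i v where "k = (q, i, v)" by (cases k)
  ultimately obtain j where "?run (qin, 0, []) (q, i, (w @ [h]) @ v)"
    and "?run (q, i, (w' @ [h]) @ v) (qf, j, (w' @ [h]) @ w')"
    unfolding midpoint_def by auto
  then have "?run (qin, 0, []) (qf, j, (w @ [h]) @ w')"
    by (rule rtranclp_step_splice)
  moreover have "set x \<subseteq> S1"
    using copies[of w] \<open>w \<in> ?W\<close> unfolding realized_def by auto
  ultimately show thesis
    using that \<open>w \<in> ?W\<close> \<open>w' \<in> ?W\<close> \<open>w \<noteq> w'\<close> unfolding realized_def by auto
qed

lemma gsm2_crossed_copy:
  fixes M :: "('q, 'c) gsm2" and X :: "nat \<Rightarrow> 'c list"
  assumes M: "is_gsm2 M" and "finite A" and "2 \<le> card A"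
    and "\<And>n. length (X n) \<le> n"
    and copies: "\<And>w. set w \<subseteq> A \<Longrightarrow> (X (length w), w @ h # w) \<in> realized M"
  obtains w w' where "set w \<subseteq> A" and "set w' \<subseteq> A" and "length w' = length w" and "w \<noteq> w'"
    and "(X (length w), w @ h # w') \<in> realized M"
proof -
  obtain Q S1 S2 \<delta> qin qf where M_eq: "M = (Q, S1, S2, \<delta>, qin, qf)" by (cases M)
  let ?V = "{v. set v \<subseteq> A \<and> length v \<le> max_output_length \<delta>}"
  obtain n where "card Q * card ?V * (n + 2) < 2 ^ n"
    using ex_mult_less_power2 by blast
  moreover have "card Q * (length (X n) + 2) * card ?V \<le> card Q * card ?V * (n + 2)"
    using assms(4)[of n] by (simp add: algebra_simps)
  moreover have "(2::nat) ^ n \<le> card {w. set w \<subseteq> A \<and> length w = n}"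
    using assms(2,3) by (simp add: card_lists_length_eq power_mono)
  ultimately have "card Q * (length (X n) + 2) * card ?V < card {w. set w \<subseteq> A \<and> length w = n}"
    by linarith
  then obtain w w' where "set w \<subseteq> A" "length w = n" "set w' \<subseteq> A" "length w' = n" "w \<noteq> w'"
    and "(X n, w @ h # w') \<in> realized M"
    using gsm2_crossed_copy_if_few_midpoints[OF M[unfolded M_eq] \<open>finite A\<close>, of "X n" n h]
      copies unfolding M_eq by blast
  then show thesis using that by simp
qed

lemma rel_m_copy_unique:
  assumes "(x, w @ h # w') \<in> rel_m a b h" and "h \<notin> {a, b}"
  shows "w' = w"
proof -
  obtain u where "w @ h # w' = u @ h # u" and "set u \<subseteq> {a, b}"
    using assms(1) unfolding rel_m_def by auto
  moreover have "h \<notin> set u" using \<open>set u \<subseteq> {a, b}\<close> assms(2) by auto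
  ultimately show ?thesis
    using append_Cons_eq_iff[of h u u w w'] by simp
qed

theorem lemma5p2:
  fixes a b h :: 'c
  assumes "distinct [a, b, h]"
  shows "\<not> (\<exists>M :: ('q, 'c) gsm2. is_gsm2 M \<and> realized M = rel_m a b h)"
proof
  assume "\<exists>M :: ('q, 'c) gsm2. is_gsm2 M \<and> realized M = rel_m a b h"
  then obtain M :: "('q, 'c) gsm2" where M: "is_gsm2 M" and realizes: "realized M = rel_m a b h"
    by blast
  obtain w w' where "w \<noteq> w'" and "(replicate (length w) a, w @ h # w') \<in> realized M"
  proof (rule gsm2_crossed_copy[OF M, of "{a, b}" "\<lambda>n. replicate n a" h])
    show "finite {a, b}" and "2 \<le> card {a, b}" using assms by auto
    show "(replicate (length w) a, w @ h # w) \<in> realized M" if "set w \<subseteq> {a, b}" for w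
      using that unfolding realizes rel_m_def by auto
  qed auto
  with assms realizes show False using rel_m_copy_unique by fastforce
qed

end
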